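(* Consider a Markov decision process with state space $\mathcal{S}$, action space $\mathcal{A}$, transition kernel $p(s' \mid s,a)$, reward function $r$, initial state distribution $p(s_0)$, and discount factor $\gamma$. Let $\pi, \hat\pi : \mathcal{S} \to \Delta(\mathcal{A})$ be policies and let $f : \mathbb{R} \to \mathbb{R}$ be a bounded, measurable, non-negative, non-decreasing function. Suppose that $\pi$ satisfies $\pi(a \mid s) \propto f(A_{\hat\pi}(s,a))\,\hat\pi(a \mid s)$ (for every $s \in \mathcal{S}$). Then $J(\pi) \geq J(\hat\pi)$.
   Context: $\Delta(\mathcal{A})$ denotes the set of probability distributions on $\mathcal{A}$. For a policy $\pi$, $J(\pi) = \mathbb{E}_{\tau \sim p(\tau\mid\pi)}\left[\sum_{t} \gamma^t r(s_t,a_t)\right]$, where trajectories $\tau = (s_0,a_0,s_1,a_1,\dots)$ are generated by $s_0 \sim p(s_0)$, $a_t \sim \pi(\cdot\mid s_t)$, $s_{t+1} \sim p(\cdot \mid s_t,a_t)$. For a policy $\hat\pi$, $Q_{\hat\pi}(s,a)$ is the expected discounted sum of future rewards obtained by starting at $s$, taking action $a$, and following $\hat\pi$ thereafter; $V_{\hat\pi}(s) = \mathbb{E}_{a\sim\hat\pi(\cdot\mid s)}[Q_{\hat\pi}(s,a)]$; and $A_{\hat\pi}(s,a) = Q_{\hat\pi}(s,a) - V_{\hat\pi}(s)$ is the advantage. The relation $\pi(a\mid s) \propto f(A_{\hat\pi}(s,a))\hat\pi(a\mid s)$ means $\pi(a\mid s) = f(A_{\hat\pi}(s,a))\hat\pi(a\mid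 s)/Z(s)$ with normalizer $Z(s) = \int_{\mathcal{A}} f(A_{\hat\pi}(s,a))\,\hat\pi(\mathrm{d}a\mid s)$. *)

theory Defs
  imports "HOL-Probability.Probability"
begin

text \<open>A policy is a kernel pi :: 's => 'a measure (pi s = pi(.|s)); the transition kernel is
  P :: 's => 'a => 's measure (P s a = p(.|s,a)); p0 is the initial state distribution.\<close>

primrec state_dist ::
  "('s \<Rightarrow> 'a \<Rightarrow> 's measure) \<Rightarrow> ('s \<Rightarrow> 'a measure) \<Rightarrow> 's measure \<Rightarrow> nat \<Rightarrow> 's measure" where
  "state_dist P pol mu 0 = mu"
| "state_dist P pol mu (Suc t) =
     bind (state_dist P pol mu t) (\<lambda>s. bind (pol s) (\<lambda>a. P s a))"

definition exp_reward :: "('s \<Rightarrow> 'a \<Rightarrow> real) \<Rightarrow> ('s \<Rightarrow> 'a measure) \<Rightarrow> 's measure \<Rightarrow> real" where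
  "exp_reward r pol mu = (\<integral>s. (\<integral>a. r s a \<partial>pol s) \<partial>mu)"

text \<open>Expected discounted return E[sum_t gamma^t r(s_t,a_t)] from s_0 ~ mu, following pol
  (written via linearity as the series of per-step expected rewards).\<close>
definition disc_return ::
  "('s \<Rightarrow> 'a \<Rightarrow> 's measure) \<Rightarrow> ('s \<Rightarrow> 'a \<Rightarrow> real) \<Rightarrow> real \<Rightarrow> ('s \<Rightarrow> 'a measure) \<Rightarrow> 's measure \<Rightarrow> real" where
  "disc_return P r \<gamma> pol mu = (\<Sum>t. \<gamma> ^ t * exp_reward r pol (state_dist P pol mu t))"

definition Jval ::
  "('s \<Rightarrow> 'a \<Rightarrow> 's measure) \<Rightarrow> ('s \<Rightarrow> 'a \<Rightarrow> real) \<Rightarrow> 's measure \<Rightarrow> real \<Rightarrow> ('s \<Rightarrow> 'a measure) \<Rightarrow> real" where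
  "Jval P r p0 \<gamma> pol = disc_return P r \<gamma> pol p0"

definition Qfun ::
  "('s \<Rightarrow> 'a \<Rightarrow> 's measure) \<Rightarrow> ('s \<Rightarrow> 'a \<Rightarrow> real) \<Rightarrow> real \<Rightarrow> ('s \<Rightarrow> 'a measure) \<Rightarrow> 's \<Rightarrow> 'a \<Rightarrow> real" where
  "Qfun P r \<gamma> pol s a = r s a + \<gamma> * disc_return P r \<gamma> pol (P s a)"

definition Vfun ::
  "('s \<Rightarrow> 'a \<Rightarrow> 's measure) \<Rightarrow> ('s \<Rightarrow> 'a \<Rightarrow> real) \<Rightarrow> real \<Rightarrow> ('s \<Rightarrow> 'a measure) \<Rightarrow> 's \<Rightarrow> real" where
  "Vfun P r \<gamma> pol s = (\<integral>a. Qfun P r \<gamma> pol s a \<partial>pol s)"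

definition Adv ::
  "('s \<Rightarrow> 'a \<Rightarrow> 's measure) \<Rightarrow> ('s \<Rightarrow> 'a \<Rightarrow> real) \<Rightarrow> real \<Rightarrow> ('s \<Rightarrow> 'a measure) \<Rightarrow> 's \<Rightarrow> 'a \<Rightarrow> real" where
  "Adv P r \<gamma> pol s a = Qfun P r \<gamma> pol s a - Vfun P r \<gamma> pol s"

definition normalizer ::
  "(real \<Rightarrow> real) \<Rightarrow> ('s \<Rightarrow> 'a \<Rightarrow> real) \<Rightarrow> ('s \<Rightarrow> 'a measure) \<Rightarrow> 's \<Rightarrow> real" where
  "normalizer f Ad pihat s = (\<integral>a. f (Ad s a) \<partial>pihat s)"

end

theory Submission
  imports Defs
begin

text \<open>
  Under the advantage-weighted policy, pol(s) is pihat(s) reweighted by a non-decreasing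
  function of the centred value Q - V, and such a reweighting cannot lower the mean: hence
  V(s) \<le> \<integral> Q(s, a) d pol(a|s) in every state, where V and Q belong to pihat.  Writing W(mu)
  for the return of pihat from a state distribution mu, Bellman's equation gives
  W(mu) = \<integral> V dmu \<le> \<integral> \<integral> Q d pol dmu = E[r under pol from mu] + \<gamma> W(mu'), mu' being the
  next-state distribution under pol.  Iterating this along the state distributions of pol,
  the bounded tail \<gamma>^n W vanishes and J(pihat) \<le> J(pol) remains.
\<close>

lemma (in prob_space) integrable_bounded_measurable:
  fixes g :: "'a \<Rightarrow> real"
  assumes "g \<in> borel_measurable M" "\<And>x. x \<in> space M \<Longrightarrow> \<bar>g x\<bar> \<le> C"
  shows "integrable M g"
  using assms by (intro integrable_const_bound[where B=C]) auto

lemma (in prob_space) abs_integral_le_bound: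
  fixes g :: "'a \<Rightarrow> real"
  assumes "g \<in> borel_measurable M" "\<And>x. x \<in> space M \<Longrightarrow> \<bar>g x\<bar> \<le> C"
  shows "\<bar>\<integral>x. g x \<partial>M\<bar> \<le> C"
proof -
  have "\<bar>\<integral>x. g x \<partial>M\<bar> \<le> (\<integral>x. \<bar>g x\<bar> \<partial>M)"
    by (rule integral_abs_bound)
  also have "\<dots> \<le> C"
    using assms by (intro integral_le_const integrable_bounded_measurable) auto
  finally show ?thesis .
qed

lemma space_prob_algebraD:
  assumes "N \<in> space (prob_algebra M)"
  shows "prob_space N" "sets N = sets M" "space N = space M"
  using assms sets_eq_imp_space_eq[of N M] by (auto simp: space_prob_algebra)

lemma integrable_bounded_in_prob_algebra:
  fixes g :: "'a \<Rightarrow> real"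
  assumes "N \<in> space (prob_algebra M)" "g \<in> borel_measurable M"
    and "\<And>x. x \<in> space M \<Longrightarrow> \<bar>g x\<bar> \<le> C"
  shows "integrable N g"
  using assms space_prob_algebraD[OF assms(1)]
  by (intro prob_space.integrable_bounded_measurable) (auto cong: measurable_cong_sets)

lemma abs_integral_le_in_prob_algebra:
  fixes g :: "'a \<Rightarrow> real"
  assumes "N \<in> space (prob_algebra M)" "g \<in> borel_measurable M"
    and "\<And>x. x \<in> space M \<Longrightarrow> \<bar>g x\<bar> \<le> C"
  shows "\<bar>\<integral>x. g x \<partial>N\<bar> \<le> C"
  using assms space_prob_algebraD[OF assms(1)]
  by (intro prob_space.abs_integral_le_bound) (auto cong: measurable_cong_sets)

lemma measurable_section_Pair:
  assumes "(\<lambda>(x, y). F x y) \<in> borel_measurable (M \<Otimes>\<^sub>M N)" and "x \<in> space M"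
  shows "F x \<in> borel_measurable N"
  using measurable_compose[OF measurable_Pair1'[OF assms(2)] assms(1)] by simp

lemma measurable_kernel_integral:
  fixes F :: "'x \<Rightarrow> 'y \<Rightarrow> 'b::{banach, second_countable_topology}"
  assumes F: "(\<lambda>(x, y). F x y) \<in> borel_measurable (M \<Otimes>\<^sub>M N)"
    and K: "K \<in> M \<rightarrow>\<^sub>M prob_algebra N"
  shows "(\<lambda>x. \<integral>y. F x y \<partial>K x) \<in> borel_measurable M"
proof -
  let ?L = "\<lambda>x. distr (K x) (M \<Otimes>\<^sub>M N) (Pair x)"
  have L: "?L \<in> M \<rightarrow>\<^sub>M subprob_algebra (M \<Otimes>\<^sub>M N)"
    by (intro measurable_prob_algebraD measurable_distr_prob_space2[OF K]) simp
  have "(\<lambda>x. \<integral>z. case_prod F z \<partial>?L x) \<in> borel_measurable M"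
    by (rule measurable_compose[OF L integral_measurable_subprob_algebra[OF F]])
  moreover have "(\<integral>z. case_prod F z \<partial>?L x) = (\<integral>y. F x y \<partial>K x)" if x: "x \<in> space M" for x
  proof -
    have "sets (K x) = sets N"
      using space_prob_algebraD(2)[OF measurable_space[OF K x]] .
    then have "Pair x \<in> K x \<rightarrow>\<^sub>M M \<Otimes>\<^sub>M N"
      using x by (simp cong: measurable_cong_sets)
    then show ?thesis by (subst integral_distr) (auto intro: F)
  qed
  ultimately show ?thesis by (rule measurable_cong[THEN iffD1, rotated]) simp
qed

lemma integrable_kernel_section:
  fixes F :: "'x \<Rightarrow> 'y \<Rightarrow> real"
  assumes F: "(\<lambda>(x, y). F x y) \<in> borel_measurable (M \<Otimes>\<^sub>M N)"
    and K: "K \<in> M \<rightarrow>\<^sub>M prob_algebra N" and x: "x \<in> space M"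
    and bound: "\<And>y. y \<in> space N \<Longrightarrow> \<bar>F x y\<bar> \<le> C"
  shows "integrable (K x) (F x)"
  by (rule integrable_bounded_in_prob_algebra[OF measurable_space[OF K x]
        measurable_section_Pair[OF F x] bound])

lemma abs_kernel_integral_le:
  fixes F :: "'x \<Rightarrow> 'y \<Rightarrow> real"
  assumes F: "(\<lambda>(x, y). F x y) \<in> borel_measurable (M \<Otimes>\<^sub>M N)"
    and K: "K \<in> M \<rightarrow>\<^sub>M prob_algebra N" and x: "x \<in> space M"
    and bound: "\<And>y. y \<in> space N \<Longrightarrow> \<bar>F x y\<bar> \<le> C"
  shows "\<bar>\<integral>y. F x y \<partial>K x\<bar> \<le> C"
  by (rule abs_integral_le_in_prob_algebra[OF measurable_space[OF K x]
        measurable_section_Pair[OF F x] bound])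

text \<open>Since x / 0 = 0, a zero normalizer would make the density the zero measure.\<close>

lemma prob_space_density_divide_imp_nonzero:
  fixes g :: "'x \<Rightarrow> real"
  assumes "prob_space (density M (\<lambda>x. ennreal (g x / Z)))"
  shows "Z \<noteq> 0"
proof
  assume "Z = 0"
  then have "emeasure (density M (\<lambda>x. ennreal (g x / Z))) (space M) = 0"
    by (simp add: emeasure_density)
  with prob_space.emeasure_space_1[OF assms] show False by simp
qed

lemma mono_times_self_ge:
  fixes f :: "real \<Rightarrow> real"
  assumes "mono f"
  shows "f 0 * x \<le> f x * x"
proof (cases "0 \<le> x")
  case True
  then show ?thesis using monoD[OF assms True] by (rule mult_right_mono[rotated])
next
  case False
  then have "f x \<le> f 0" using monoD[OF assms, of x 0] by simp
  then show ?thesis using False by (intro mult_right_mono_neg) auto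
qed

text \<open>
  With w = f(q - V) / Z we have \<integral> w = 1 and \<integral> (q - V) = 0, so the gain of the reweighted mean
  over V is \<integral> (w - f 0 / Z) (q - V), whose integrand is non-negative as f is non-decreasing.
\<close>

lemma integral_le_integral_density_mono_centered:
  fixes M :: "'x measure" and q :: "'x \<Rightarrow> real" and f :: "real \<Rightarrow> real"
  defines "V \<equiv> \<integral>x. q x \<partial>M"
  defines "Z \<equiv> \<integral>x. f (q x - V) \<partial>M"
  assumes M: "prob_space M" and q: "integrable M q"
    and f: "f \<in> borel_measurable borel" and f_bdd: "\<And>x. \<bar>f x\<bar> \<le> C"
    and f_nonneg: "\<And>x. 0 \<le> f x" and f_mono: "mono f"
    and Z_pos: "0 < Z"
  shows "V \<le> (\<integral>x. q x \<partial>density M (\<lambda>x. ennreal (f (q x - V) / Z)))"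
proof -
  interpret prob_space M by (rule M)
  define w where "w x = f (q x - V) / Z" for x
  have fm: "(\<lambda>x. f (q x - V)) \<in> borel_measurable M"
    using f q by measurable
  have fi: "integrable M (\<lambda>x. f (q x - V))"
    using fm f_bdd by (intro integrable_bounded_measurable)
  have wm: "w \<in> borel_measurable M"
    unfolding w_def using fm by simp
  have w_int: "(\<integral>x. w x \<partial>M) = 1"
    unfolding w_def using Z_pos by (simp add: Z_def)
  have wqi: "integrable M (\<lambda>x. w x * q x)"
  proof (rule Bochner_Integration.integrable_bound[of _ "\<lambda>x. C / Z * q x"])
    show "integrable M (\<lambda>x. C / Z * q x)" using q by simp
    show "(\<lambda>x. w x * q x) \<in> borel_measurable M" using wm q by simp
    show "AE x in M. norm (w x * q x) \<le> norm (C / Z * q x)"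
    proof (rule AE_I2)
      fix x
      have "\<bar>f (q x - V)\<bar> * \<bar>q x\<bar> \<le> \<bar>C\<bar> * \<bar>q x\<bar>"
        using f_bdd[of "q x - V"] by (intro mult_right_mono) auto
      then show "norm (w x * q x) \<le> norm (C / Z * q x)"
        using Z_pos by (simp add: w_def abs_mult divide_right_mono)
    qed
  qed
  have weighted: "f 0 / Z * (q x - V) \<le> w x * (q x - V)" for x
    using divide_right_mono[OF mono_times_self_ge[OF f_mono], of Z "q x - V"] Z_pos
    by (simp add: w_def)
  have "V = (\<integral>x. f 0 / Z * (q x - V) \<partial>M) + V"
    using q by (simp add: V_def prob_space)
  also have "\<dots> \<le> (\<integral>x. w x * (q x - V) \<partial>M) + V"
    using q wqi fi weighted
    by (intro add_right_mono integral_mono) (auto simp: w_def right_diff_distrib)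
  also have "\<dots> = (\<integral>x. w x * q x \<partial>M)"
    using wqi fi w_int by (simp add: w_def right_diff_distrib)
  also have "\<dots> = (\<integral>x. q x \<partial>density M (\<lambda>x. ennreal (w x)))"
    using wm q f_nonneg Z_pos by (subst integral_density) (auto simp: w_def)
  finally show ?thesis by (simp add: w_def)
qed

lemma state_dist_shift:
  "state_dist P pol (bind mu (\<lambda>s. bind (pol s) (\<lambda>a. P s a))) t = state_dist P pol mu (Suc t)"
  by (induction t) simp_all

lemma le_suminf_of_discounted_recursion:
  fixes w e :: "nat \<Rightarrow> real"
  assumes discount: "0 \<le> \<gamma>" "\<gamma> < 1" and w_bdd: "\<And>n. \<bar>w n\<bar> \<le> C"
    and e_summable: "summable (\<lambda>t. \<gamma> ^ t * e t)"
    and recursion: "\<And>n. w n \<le> e n + \<gamma> * w (Suc n)"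
  shows "w 0 \<le> (\<Sum>t. \<gamma> ^ t * e t)"
proof -
  have unrolled: "w 0 \<le> (\<Sum>t<n. \<gamma> ^ t * e t) + \<gamma> ^ n * w n" for n
  proof (induction n)
    case 0
    then show ?case by simp
  next
    case (Suc n)
    have "\<gamma> ^ n * w n \<le> \<gamma> ^ n * (e n + \<gamma> * w (Suc n))"
      using recursion discount by (intro mult_left_mono) auto
    with Suc show ?case by (simp add: algebra_simps)
  qed
  have "(\<lambda>n. \<gamma> ^ n * w n) \<longlonglongrightarrow> 0"
  proof (rule Lim_null_comparison)
    show "\<forall>\<^sub>F n in sequentially. norm (\<gamma> ^ n * w n) \<le> \<gamma> ^ n * C"
      using w_bdd discount by (intro always_eventually allI) (simp add: abs_mult mult_left_mono)
    show "(\<lambda>n. \<gamma> ^ n * C) \<longlonglongrightarrow> 0"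
      using discount by (intro tendsto_mult_left_zero LIMSEQ_power_zero) auto
  qed
  then have "(\<lambda>n. (\<Sum>t<n. \<gamma> ^ t * e t) + \<gamma> ^ n * w n) \<longlonglongrightarrow> (\<Sum>t. \<gamma> ^ t * e t)"
    using tendsto_add[OF summable_LIMSEQ[OF e_summable]] by fastforce
  then show ?thesis
    by (rule LIMSEQ_le_const) (use unrolled in blast)
qed

locale discounted_mdp =
  fixes S :: "'s measure" and Act :: "'a measure"
    and P :: "'s \<Rightarrow> 'a \<Rightarrow> 's measure" and r :: "'s \<Rightarrow> 'a \<Rightarrow> real"
    and \<gamma> :: real and B :: real
  assumes transition: "(\<lambda>(s, a). P s a) \<in> S \<Otimes>\<^sub>M Act \<rightarrow>\<^sub>M prob_algebra S"
    and measurable_reward: "(\<lambda>(s, a). r s a) \<in> borel_measurable (S \<Otimes>\<^sub>M Act)"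
    and abs_reward_le: "\<And>s a. s \<in> space S \<Longrightarrow> a \<in> space Act \<Longrightarrow> \<bar>r s a\<bar> \<le> B"
    and discount: "0 \<le> \<gamma>" "\<gamma> < 1"
begin

lemma transition_kernel: "s \<in> space S \<Longrightarrow> P s \<in> Act \<rightarrow>\<^sub>M prob_algebra S"
  using measurable_compose[OF measurable_Pair1' transition] by simp

lemma next_state_kernel:
  "pol \<in> S \<rightarrow>\<^sub>M prob_algebra Act \<Longrightarrow>
    (\<lambda>s. bind (pol s) (\<lambda>a. P s a)) \<in> S \<rightarrow>\<^sub>M prob_algebra S"
  by (rule measurable_bind_prob_space2[OF _ transition])

lemma measurable_state_dist:
  assumes pol: "pol \<in> S \<rightarrow>\<^sub>M prob_algebra Act"
  shows "(\<lambda>mu. state_dist P pol mu t) \<in> prob_algebra S \<rightarrow>\<^sub>M prob_algebra S"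
proof (induction t)
  case 0
  then show ?case by simp
next
  case (Suc t)
  then show ?case by (simp add: measurable_bind_prob_space[OF Suc next_state_kernel[OF pol]])
qed

lemma state_dist_in_prob_algebra:
  "pol \<in> S \<rightarrow>\<^sub>M prob_algebra Act \<Longrightarrow> mu \<in> space (prob_algebra S) \<Longrightarrow>
    state_dist P pol mu t \<in> space (prob_algebra S)"
  by (rule measurable_space[OF measurable_state_dist])

lemma state_dist_bind:
  assumes pol: "pol \<in> S \<rightarrow>\<^sub>M prob_algebra Act" and K: "K \<in> X \<rightarrow>\<^sub>M prob_algebra S"
    and nu: "nu \<in> space (prob_algebra X)"
  shows "state_dist P pol (bind nu K) t = bind nu (\<lambda>x. state_dist P pol (K x) t)"
proof (induction t)
  case 0
  then show ?case by simp
next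
  case (Suc t)
  have "(\<lambda>x. state_dist P pol (K x) t) \<in> nu \<rightarrow>\<^sub>M subprob_algebra S"
    using measurable_prob_algebraD[OF measurable_compose[OF K measurable_state_dist[OF pol]]]
      space_prob_algebraD(2)[OF nu] by (simp cong: measurable_cong_sets)
  with Suc show ?case
    using bind_assoc[OF _ measurable_prob_algebraD[OF next_state_kernel[OF pol]]] by simp
qed

lemma measurable_policy_reward:
  "pol \<in> S \<rightarrow>\<^sub>M prob_algebra Act \<Longrightarrow> (\<lambda>s. \<integral>a. r s a \<partial>pol s) \<in> borel_measurable S"
  by (rule measurable_kernel_integral[OF measurable_reward])

lemma abs_policy_reward_le:
  assumes pol: "pol \<in> S \<rightarrow>\<^sub>M prob_algebra Act" and s: "s \<in> space S"
  shows "\<bar>\<integral>a. r s a \<partial>pol s\<bar> \<le> B"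
  by (rule abs_kernel_integral_le[OF measurable_reward pol s abs_reward_le[OF s]])

lemma measurable_exp_reward:
  assumes pol: "pol \<in> S \<rightarrow>\<^sub>M prob_algebra Act"
  shows "exp_reward r pol \<in> borel_measurable (prob_algebra S)"
  unfolding exp_reward_def prob_algebra_def
  by (intro measurable_restrict_space1 integral_measurable_subprob_algebra
      measurable_policy_reward[OF pol])

lemma abs_exp_reward_le:
  assumes pol: "pol \<in> S \<rightarrow>\<^sub>M prob_algebra Act" and mu: "mu \<in> space (prob_algebra S)"
  shows "\<bar>exp_reward r pol mu\<bar> \<le> B"
  unfolding exp_reward_def
  by (rule abs_integral_le_in_prob_algebra[OF mu measurable_policy_reward[OF pol]
        abs_policy_reward_le[OF pol]])

lemma exp_reward_bind:
  assumes pol: "pol \<in> S \<rightarrow>\<^sub>M prob_algebra Act" and K: "K \<in> X \<rightarrow>\<^sub>M prob_algebra S"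
    and nu: "nu \<in> space (prob_algebra X)"
  shows "exp_reward r pol (bind nu K) = (\<integral>x. exp_reward r pol (K x) \<partial>nu)"
proof -
  have K_sub: "K \<in> nu \<rightarrow>\<^sub>M subprob_algebra S"
    using measurable_prob_algebraD[OF K] space_prob_algebraD(2)[OF nu]
    by (simp cong: measurable_cong_sets)
  have K_le_1: "AE x in nu. emeasure (K x) (space (K x)) \<le> ennreal 1"
    using subprob_space.emeasure_space_le_1[OF subprob_space_kernel[OF K_sub]]
    by (intro AE_I2) simp
  show ?thesis
    unfolding exp_reward_def
    by (rule integral_bind[OF measurable_policy_reward[OF pol] abs_policy_reward_le[OF pol] K_sub
          prob_space.finite_measure[OF space_prob_algebraD(1)[OF nu]] K_le_1])
qed

lemma abs_discounted_reward_le: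
  assumes pol: "pol \<in> S \<rightarrow>\<^sub>M prob_algebra Act" and mu: "mu \<in> space (prob_algebra S)"
  shows "norm (\<gamma> ^ t * exp_reward r pol (state_dist P pol mu t)) \<le> B * \<gamma> ^ t"
  using mult_left_mono[OF abs_exp_reward_le[OF pol state_dist_in_prob_algebra[OF pol mu]]
      zero_le_power[OF discount(1)]]
  by (simp add: abs_mult mult.commute discount(1))

lemma summable_norm_discounted_rewards:
  assumes pol: "pol \<in> S \<rightarrow>\<^sub>M prob_algebra Act" and mu: "mu \<in> space (prob_algebra S)"
  shows "summable (\<lambda>t. norm (\<gamma> ^ t * exp_reward r pol (state_dist P pol mu t)))"
proof (rule summable_comparison_test')
  show "summable (\<lambda>t. B * \<gamma> ^ t)"
    using discount by (intro summable_mult) simp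
qed (use abs_discounted_reward_le[OF pol mu] in simp)

lemma summable_discounted_rewards:
  "pol \<in> S \<rightarrow>\<^sub>M prob_algebra Act \<Longrightarrow> mu \<in> space (prob_algebra S) \<Longrightarrow>
    summable (\<lambda>t. \<gamma> ^ t * exp_reward r pol (state_dist P pol mu t))"
  by (rule summable_norm_cancel[OF summable_norm_discounted_rewards])

lemma measurable_disc_return:
  assumes pol: "pol \<in> S \<rightarrow>\<^sub>M prob_algebra Act"
  shows "disc_return P r \<gamma> pol \<in> borel_measurable (prob_algebra S)"
  unfolding disc_return_def
  by (intro borel_measurable_suminf borel_measurable_times measurable_const
      measurable_compose[OF measurable_state_dist[OF pol] measurable_exp_reward[OF pol]]) auto

lemma abs_disc_return_le:
  assumes pol: "pol \<in> S \<rightarrow>\<^sub>M prob_algebra Act" and mu: "mu \<in> space (prob_algebra S)"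
  shows "\<bar>disc_return P r \<gamma> pol mu\<bar> \<le> B / (1 - \<gamma>)"
proof -
  have "\<bar>disc_return P r \<gamma> pol mu\<bar>
      \<le> (\<Sum>t. norm (\<gamma> ^ t * exp_reward r pol (state_dist P pol mu t)))"
    unfolding disc_return_def using summable_norm[OF summable_norm_discounted_rewards[OF pol mu]]
    by simp
  also have "\<dots> \<le> (\<Sum>t. B * \<gamma> ^ t)"
    using discount
    by (intro suminf_le[OF abs_discounted_reward_le[OF pol mu]
          summable_norm_discounted_rewards[OF pol mu] summable_mult]) simp
  also have "\<dots> = B / (1 - \<gamma>)"
    using discount by (simp add: suminf_mult suminf_geometric)
  finally show ?thesis .
qed

lemma disc_return_unfold:
  assumes pol: "pol \<in> S \<rightarrow>\<^sub>M prob_algebra Act" and mu: "mu \<in> space (prob_algebra S)"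
  shows "disc_return P r \<gamma> pol mu = exp_reward r pol mu
     + \<gamma> * disc_return P r \<gamma> pol (bind mu (\<lambda>s. bind (pol s) (\<lambda>a. P s a)))"
proof -
  let ?mu1 = "bind mu (\<lambda>s. bind (pol s) (\<lambda>a. P s a))"
  let ?e = "\<lambda>t. \<gamma> ^ t * exp_reward r pol (state_dist P pol mu t)"
  have mu1: "?mu1 \<in> space (prob_algebra S)"
    using state_dist_in_prob_algebra[OF pol mu, of 1] by simp
  have "(\<Sum>t. ?e (Suc t))
      = (\<Sum>t. \<gamma> * (\<gamma> ^ t * exp_reward r pol (state_dist P pol ?mu1 t)))"
    by (simp add: state_dist_shift mult.assoc)
  also have "\<dots> = \<gamma> * disc_return P r \<gamma> pol ?mu1"
    unfolding disc_return_def by (rule suminf_mult[OF summable_discounted_rewards[OF pol mu1]])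
  finally have "(\<Sum>t. ?e (Suc t)) = \<gamma> * disc_return P r \<gamma> pol ?mu1" .
  with suminf_split_head[OF summable_discounted_rewards[OF pol mu]] show ?thesis
    unfolding disc_return_def by simp
qed

lemma disc_return_bind:
  assumes pol: "pol \<in> S \<rightarrow>\<^sub>M prob_algebra Act" and K: "K \<in> X \<rightarrow>\<^sub>M prob_algebra S"
    and nu: "nu \<in> space (prob_algebra X)"
  shows "disc_return P r \<gamma> pol (bind nu K) = (\<integral>x. disc_return P r \<gamma> pol (K x) \<partial>nu)"
proof -
  define F where "F t x = \<gamma> ^ t * exp_reward r pol (state_dist P pol (K x) t)" for t x
  have K_state_dist: "(\<lambda>x. state_dist P pol (K x) t) \<in> X \<rightarrow>\<^sub>M prob_algebra S" for t
    by (rule measurable_compose[OF K measurable_state_dist[OF pol]])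
  have F_meas: "F t \<in> borel_measurable X" for t
    unfolding F_def
    by (intro borel_measurable_times measurable_const
        measurable_compose[OF K_state_dist measurable_exp_reward[OF pol]]) auto
  have F_bdd: "x \<in> space X \<Longrightarrow> norm (F t x) \<le> B * \<gamma> ^ t" for t x
    unfolding F_def by (rule abs_discounted_reward_le[OF pol measurable_space[OF K]])
  have "summable (\<lambda>t. \<integral>x. norm (F t x) \<partial>nu)"
  proof (rule summable_comparison_test')
    show "summable (\<lambda>t. B * \<gamma> ^ t)"
      using discount by (intro summable_mult) simp
    fix t
    have "\<bar>\<integral>x. \<bar>F t x\<bar> \<partial>nu\<bar> \<le> B * \<gamma> ^ t"
      by (rule abs_integral_le_in_prob_algebra[OF nu]) (use F_meas F_bdd in auto)
    then show "norm (\<integral>x. norm (F t x) \<partial>nu) \<le> B * \<gamma> ^ t" by simp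
  qed
  moreover have "AE x in nu. summable (\<lambda>t. norm (F t x))"
    using summable_norm_discounted_rewards[OF pol measurable_space[OF K]]
      space_prob_algebraD(3)[OF nu] by (intro AE_I2) (simp add: F_def)
  moreover have "integrable nu (F t)" for t
    using F_meas F_bdd by (intro integrable_bounded_in_prob_algebra[OF nu]) auto
  ultimately have "(\<Sum>t. \<integral>x. F t x \<partial>nu) = (\<integral>x. (\<Sum>t. F t x) \<partial>nu)"
    by (intro integral_suminf[symmetric])
  then show ?thesis
    unfolding disc_return_def F_def
    by (simp add: state_dist_bind[OF pol K nu] exp_reward_bind[OF pol K_state_dist nu])
qed

lemma measurable_disc_return_transition:
  assumes pihat: "pihat \<in> S \<rightarrow>\<^sub>M prob_algebra Act"
  shows "(\<lambda>(s, a). disc_return P r \<gamma> pihat (P s a)) \<in> borel_measurable (S \<Otimes>\<^sub>M Act)"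
  using measurable_compose[OF transition measurable_disc_return[OF pihat]]
  by (simp add: case_prod_beta')

lemma abs_disc_return_transition_le:
  "pihat \<in> S \<rightarrow>\<^sub>M prob_algebra Act \<Longrightarrow> s \<in> space S \<Longrightarrow> a \<in> space Act \<Longrightarrow>
    \<bar>disc_return P r \<gamma> pihat (P s a)\<bar> \<le> B / (1 - \<gamma>)"
  by (rule abs_disc_return_le[OF _ measurable_space[OF transition_kernel]])

lemma measurable_Qfun:
  assumes pihat: "pihat \<in> S \<rightarrow>\<^sub>M prob_algebra Act"
  shows "(\<lambda>(s, a). Qfun P r \<gamma> pihat s a) \<in> borel_measurable (S \<Otimes>\<^sub>M Act)"
  using borel_measurable_add[OF measurable_reward
      borel_measurable_times[OF measurable_const measurable_disc_return_transition[OF pihat]]]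
  by (simp add: Qfun_def case_prod_beta')

lemma abs_Qfun_le:
  assumes pihat: "pihat \<in> S \<rightarrow>\<^sub>M prob_algebra Act" and s: "s \<in> space S" and a: "a \<in> space Act"
  shows "\<bar>Qfun P r \<gamma> pihat s a\<bar> \<le> B + B / (1 - \<gamma>)"
proof -
  have "\<bar>\<gamma> * disc_return P r \<gamma> pihat (P s a)\<bar> \<le> 1 * (B / (1 - \<gamma>))"
    unfolding abs_mult using discount abs_disc_return_transition_le[OF pihat s a]
    by (intro mult_mono) auto
  then show ?thesis
    unfolding Qfun_def using abs_reward_le[OF s a] by simp
qed

lemma integral_Qfun_eq_one_step:
  assumes pihat: "pihat \<in> S \<rightarrow>\<^sub>M prob_algebra Act" and pol: "pol \<in> S \<rightarrow>\<^sub>M prob_algebra Act"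
    and mu: "mu \<in> space (prob_algebra S)"
  shows "exp_reward r pol mu
      + \<gamma> * disc_return P r \<gamma> pihat (bind mu (\<lambda>s. bind (pol s) (\<lambda>a. P s a)))
    = (\<integral>s. (\<integral>a. Qfun P r \<gamma> pihat s a \<partial>pol s) \<partial>mu)"
proof -
  note W_trans = measurable_disc_return_transition[OF pihat]
  define h where "h s = (\<integral>a. disc_return P r \<gamma> pihat (P s a) \<partial>pol s)" for s
  have h_int: "integrable mu h"
    unfolding h_def
    using abs_kernel_integral_le[OF W_trans pol _ abs_disc_return_transition_le[OF pihat]]
    by (intro integrable_bounded_in_prob_algebra[OF mu
          measurable_kernel_integral[OF W_trans pol]])
  have reward_int: "integrable mu (\<lambda>s. \<integral>a. r s a \<partial>pol s)"
    using abs_policy_reward_le[OF pol]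
    by (intro integrable_bounded_in_prob_algebra[OF mu measurable_policy_reward[OF pol]])
  have "disc_return P r \<gamma> pihat (bind mu (\<lambda>s. bind (pol s) (\<lambda>a. P s a)))
      = (\<integral>s. disc_return P r \<gamma> pihat (bind (pol s) (\<lambda>a. P s a)) \<partial>mu)"
    by (rule disc_return_bind[OF pihat next_state_kernel[OF pol] mu])
  also have "\<dots> = (\<integral>s. h s \<partial>mu)"
    using disc_return_bind[OF pihat transition_kernel measurable_space[OF pol]]
      space_prob_algebraD(3)[OF mu]
    by (intro Bochner_Integration.integral_cong) (simp_all add: h_def)
  finally have W_step: "disc_return P r \<gamma> pihat (bind mu (\<lambda>s. bind (pol s) (\<lambda>a. P s a)))
      = (\<integral>s. h s \<partial>mu)" .
  have Q_split: "(\<integral>a. Qfun P r \<gamma> pihat s a \<partial>pol s) = (\<integral>a. r s a \<partial>pol s) + \<gamma> * h s"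
    if s: "s \<in> space S" for s
    using integrable_kernel_section[OF measurable_reward pol s abs_reward_le[OF s]]
      integrable_kernel_section[OF W_trans pol s abs_disc_return_transition_le[OF pihat s]]
    by (simp add: Qfun_def h_def)
  have "(\<integral>s. (\<integral>a. Qfun P r \<gamma> pihat s a \<partial>pol s) \<partial>mu)
      = (\<integral>s. (\<integral>a. r s a \<partial>pol s) + \<gamma> * h s \<partial>mu)"
    using Q_split space_prob_algebraD(3)[OF mu] by (intro Bochner_Integration.integral_cong) auto
  also have "\<dots> = exp_reward r pol mu + \<gamma> * (\<integral>s. h s \<partial>mu)"
    using reward_int h_int by (simp add: exp_reward_def)
  finally show ?thesis
    by (simp add: W_step)
qed

lemma disc_return_eq_integral_Vfun:
  "pihat \<in> S \<rightarrow>\<^sub>M prob_algebra Act \<Longrightarrow> mu \<in> space (prob_algebra S) \<Longrightarrow>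
    disc_return P r \<gamma> pihat mu = (\<integral>s. Vfun P r \<gamma> pihat s \<partial>mu)"
  unfolding Vfun_def by (simp add: disc_return_unfold integral_Qfun_eq_one_step)

theorem policy_improvement:
  assumes pol: "pol \<in> S \<rightarrow>\<^sub>M prob_algebra Act" and pihat: "pihat \<in> S \<rightarrow>\<^sub>M prob_algebra Act"
    and mu: "mu \<in> space (prob_algebra S)"
    and improves: "\<And>s. s \<in> space S \<Longrightarrow>
      Vfun P r \<gamma> pihat s \<le> (\<integral>a. Qfun P r \<gamma> pihat s a \<partial>pol s)"
  shows "disc_return P r \<gamma> pihat mu \<le> disc_return P r \<gamma> pol mu"
proof -
  have Q_int: "integrable nu (\<lambda>s. \<integral>a. Qfun P r \<gamma> pihat s a \<partial>K s)"
    if nu: "nu \<in> space (prob_algebra S)" and K: "K \<in> S \<rightarrow>\<^sub>M prob_algebra Act" for nu K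
    using abs_kernel_integral_le[OF measurable_Qfun[OF pihat] K _ abs_Qfun_le[OF pihat]]
    by (intro integrable_bounded_in_prob_algebra[OF nu
          measurable_kernel_integral[OF measurable_Qfun[OF pihat] K]])
  have step: "disc_return P r \<gamma> pihat nu \<le> exp_reward r pol nu
      + \<gamma> * disc_return P r \<gamma> pihat (bind nu (\<lambda>s. bind (pol s) (\<lambda>a. P s a)))"
    if nu: "nu \<in> space (prob_algebra S)" for nu
  proof -
    have "disc_return P r \<gamma> pihat nu = (\<integral>s. Vfun P r \<gamma> pihat s \<partial>nu)"
      by (rule disc_return_eq_integral_Vfun[OF pihat nu])
    also have "\<dots> \<le> (\<integral>s. (\<integral>a. Qfun P r \<gamma> pihat s a \<partial>pol s) \<partial>nu)"
      using Q_int[OF nu pihat] Q_int[OF nu pol] improves space_prob_algebraD(3)[OF nu]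
      by (intro integral_mono) (auto simp: Vfun_def)
    finally show ?thesis
      by (simp add: integral_Qfun_eq_one_step[OF pihat pol nu])
  qed
  have "disc_return P r \<gamma> pihat (state_dist P pol mu 0)
      \<le> (\<Sum>t. \<gamma> ^ t * exp_reward r pol (state_dist P pol mu t))"
    using step[OF state_dist_in_prob_algebra[OF pol mu]]
    by (intro le_suminf_of_discounted_recursion[OF discount
          abs_disc_return_le[OF pihat state_dist_in_prob_algebra[OF pol mu]]
          summable_discounted_rewards[OF pol mu]]) simp
  then show ?thesis
    unfolding disc_return_def[of P r \<gamma> pol] by simp
qed

lemma Vfun_le_integral_Qfun_reweighted:
  fixes pihat :: "'s \<Rightarrow> 'a measure" and f :: "real \<Rightarrow> real"
  defines "w \<equiv> \<lambda>s a. ennreal (f (Adv P r \<gamma> pihat s a)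
    / normalizer f (Adv P r \<gamma> pihat) pihat s)"
  assumes pihat: "pihat \<in> S \<rightarrow>\<^sub>M prob_algebra Act" and s: "s \<in> space S"
    and f: "f \<in> borel_measurable borel" "\<And>x. \<bar>f x\<bar> \<le> C" "\<And>x. 0 \<le> f x" "mono f"
    and prob: "prob_space (density (pihat s) (w s))"
  shows "Vfun P r \<gamma> pihat s \<le> (\<integral>a. Qfun P r \<gamma> pihat s a \<partial>density (pihat s) (w s))"
proof -
  let ?q = "Qfun P r \<gamma> pihat s"
  let ?Z = "normalizer f (Adv P r \<gamma> pihat) pihat s"
  have Adv_eq: "Adv P r \<gamma> pihat s a = ?q a - (\<integral>a. ?q a \<partial>pihat s)" for a
    by (simp add: Adv_def Vfun_def)
  have Z_eq: "?Z = (\<integral>a. f (?q a - (\<integral>a. ?q a \<partial>pihat s)) \<partial>pihat s)"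
    by (simp add: normalizer_def Adv_eq)
  have "0 \<le> ?Z"
    unfolding normalizer_def using f(3) by (intro integral_nonneg_AE) auto
  moreover have "?Z \<noteq> 0"
    using prob unfolding w_def by (rule prob_space_density_divide_imp_nonzero)
  ultimately have "0 < (\<integral>a. f (?q a - (\<integral>a. ?q a \<partial>pihat s)) \<partial>pihat s)"
    unfolding Z_eq by simp
  from integral_le_integral_density_mono_centered[OF
      space_prob_algebraD(1)[OF measurable_space[OF pihat s]]
      integrable_kernel_section[OF measurable_Qfun[OF pihat] pihat s abs_Qfun_le[OF pihat s]]
      f this]
  show ?thesis
    unfolding w_def Vfun_def Adv_eq Z_eq .
qed

end

theorem theoremA4:
  fixes S :: "'s measure" and Act :: "'a measure"
    and P :: "'s \<Rightarrow> 'a \<Rightarrow> 's measure" and r :: "'s \<Rightarrow> 'a \<Rightarrow> real"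
    and p0 :: "'s measure" and \<gamma> :: real
    and pol pihat :: "'s \<Rightarrow> 'a measure" and f :: "real \<Rightarrow> real"
  assumes trans: "(\<lambda>(s, a). P s a) \<in> S \<Otimes>\<^sub>M Act \<rightarrow>\<^sub>M prob_algebra S"
    and init: "p0 \<in> space (prob_algebra S)"
    and rew_meas: "(\<lambda>(s, a). r s a) \<in> borel_measurable (S \<Otimes>\<^sub>M Act)"
    and rew_bdd: "\<exists>B. \<forall>s\<in>space S. \<forall>a\<in>space Act. \<bar>r s a\<bar> \<le> B"
    and disc: "0 \<le> \<gamma>" "\<gamma> < 1"
    and pol_kernel: "pol \<in> S \<rightarrow>\<^sub>M prob_algebra Act"
    and pihat_kernel: "pihat \<in> S \<rightarrow>\<^sub>M prob_algebra Act"
    and f_meas: "f \<in> borel_measurable borel"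
    and f_bdd: "\<exists>B. \<forall>x. \<bar>f x\<bar> \<le> B"
    and f_nonneg: "\<And>x. 0 \<le> f x"
    and f_mono: "mono f"
    and propto: "\<And>s. s \<in> space S \<Longrightarrow>
       pol s = density (pihat s)
         (\<lambda>a. ennreal (f (Adv P r \<gamma> pihat s a)
                 / normalizer f (Adv P r \<gamma> pihat) pihat s))"
  shows "Jval P r p0 \<gamma> pol \<ge> Jval P r p0 \<gamma> pihat"
proof -
  obtain B where B: "\<forall>s\<in>space S. \<forall>a\<in>space Act. \<bar>r s a\<bar> \<le> B"
    using rew_bdd by blast
  obtain C where C: "\<And>x. \<bar>f x\<bar> \<le> C"
    using f_bdd by blast
  interpret discounted_mdp S Act P r \<gamma> B
    using trans rew_meas B disc by unfold_locales auto
  have "Vfun P r \<gamma> pihat s \<le> (\<integral>a. Qfun P r \<gamma> pihat s a \<partial>pol s)" if s: "s \<in> space S" for s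
    using Vfun_le_integral_Qfun_reweighted[OF pihat_kernel s f_meas C f_nonneg f_mono]
      space_prob_algebraD(1)[OF measurable_space[OF pol_kernel s]]
    unfolding propto[OF s] by blast
  then show ?thesis
    unfolding Jval_def by (rule policy_improvement[OF pol_kernel pihat_kernel init])
qed

end
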